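(* Let $G$ be a $K_4$-minor-free graph and $X$ a set of three vertices of $G$. If there is a proper $3$-coloring $\phi$ of $G$ with $|\phi(X)|=2$, then $X$ is feasible.
   Context: For $n\in\mathbb{N}$, the chain of diamonds $D_n$ is the graph with vertex set $\{u_i,v_i,w_i:i\in[n]\}\cup\{u_0\}$ and edge set $\{u_{i-1}v_i,u_{i-1}w_i,v_iw_i,v_iu_i,w_iu_i: i\in[n]\}$; let $U(D_n)=\{u_0,\dots,u_n\}$. A set $X$ of distinct vertices of $G$ is connected by a chain of diamonds if there exist $n\in\mathbb{N}$ and a graph homomorphism $\varphi:D_n\to G$ with $X\subseteq\varphi(U(D_n))$. A set $X$ of three distinct vertices of $G$ is feasible if $X$ is not connected by a chain of diamonds and there is a proper $3$-coloring $\phi$ of $G$ with $|\phi(X)|\le 2$. *)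

theory Defs
  imports Main
begin

definition graph :: "'a set \<Rightarrow> ('a \<Rightarrow> 'a \<Rightarrow> bool) \<Rightarrow> bool" where
  "graph V E \<longleftrightarrow> finite V \<and> (\<forall>x y. E x y \<longrightarrow> x \<in> V \<and> y \<in> V)
     \<and> (\<forall>x y. E x y \<longrightarrow> E y x) \<and> (\<forall>x. \<not> E x x)"

definition connected_set :: "('a \<Rightarrow> 'a \<Rightarrow> bool) \<Rightarrow> 'a set \<Rightarrow> bool" where
  "connected_set E S \<longleftrightarrow>
     (\<forall>x\<in>S. \<forall>y\<in>S. (\<lambda>a b. E a b \<and> a \<in> S \<and> b \<in> S)\<^sup>*\<^sup>* x y)"

definition has_K4_minor :: "'a set \<Rightarrow> ('a \<Rightarrow> 'a \<Rightarrow> bool) \<Rightarrow> bool" where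
  "has_K4_minor V E \<longleftrightarrow> (\<exists>B :: nat \<Rightarrow> 'a set.
     (\<forall>i<4. B i \<noteq> {} \<and> B i \<subseteq> V \<and> connected_set E (B i)) \<and>
     (\<forall>i<4. \<forall>j<4. i \<noteq> j \<longrightarrow> B i \<inter> B j = {} \<and> (\<exists>x\<in>B i. \<exists>y\<in>B j. E x y)))"

definition K4_minor_free :: "'a set \<Rightarrow> ('a \<Rightarrow> 'a \<Rightarrow> bool) \<Rightarrow> bool" where
  "K4_minor_free V E \<longleftrightarrow> \<not> has_K4_minor V E"

definition proper_3_coloring :: "'a set \<Rightarrow> ('a \<Rightarrow> 'a \<Rightarrow> bool) \<Rightarrow> ('a \<Rightarrow> nat) \<Rightarrow> bool" where
  "proper_3_coloring V E \<phi> \<longleftrightarrow> (\<forall>x\<in>V. \<phi> x < 3) \<and> (\<forall>x y. E x y \<longrightarrow> \<phi> x \<noteq> \<phi> y)"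

text \<open>A homomorphism from the chain of diamonds D_n into G, given by the images
  u i (i = 0..n), v i, w i (i = 1..n).\<close>
definition diamond_chain_hom ::
  "'a set \<Rightarrow> ('a \<Rightarrow> 'a \<Rightarrow> bool) \<Rightarrow> nat \<Rightarrow> (nat \<Rightarrow> 'a) \<Rightarrow> (nat \<Rightarrow> 'a) \<Rightarrow> (nat \<Rightarrow> 'a) \<Rightarrow> bool" where
  "diamond_chain_hom V E n u v w \<longleftrightarrow>
     (\<forall>i\<in>{0..n}. u i \<in> V) \<and> (\<forall>i\<in>{1..n}. v i \<in> V \<and> w i \<in> V) \<and>
     (\<forall>i\<in>{1..n}. E (u (i - 1)) (v i) \<and> E (u (i - 1)) (w i) \<and> E (v i) (w i)
                  \<and> E (v i) (u i) \<and> E (w i) (u i))"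

definition connected_by_chain_of_diamonds ::
  "'a set \<Rightarrow> ('a \<Rightarrow> 'a \<Rightarrow> bool) \<Rightarrow> 'a set \<Rightarrow> bool" where
  "connected_by_chain_of_diamonds V E X \<longleftrightarrow>
     (\<exists>n u v w. diamond_chain_hom V E n u v w \<and> X \<subseteq> u ` {0..n})"

definition feasible :: "'a set \<Rightarrow> ('a \<Rightarrow> 'a \<Rightarrow> bool) \<Rightarrow> 'a set \<Rightarrow> bool" where
  "feasible V E X \<longleftrightarrow> X \<subseteq> V \<and> card X = 3 \<and>
     \<not> connected_by_chain_of_diamonds V E X \<and>
     (\<exists>\<phi>. proper_3_coloring V E \<phi> \<and> card (\<phi> ` X) \<le> 2)"

end

theory Submission
  imports Defs
begin

text \<open>In a proper 3-colouring the two tips of a diamond get the same colour, because the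
  middle edge uses up the other two colours. Hence all vertices u i of a chain of diamonds
  share one colour, so a set connected by a chain of diamonds is monochromatic under every
  proper 3-colouring, and a colouring using two colours on X excludes such a chain.\<close>

lemma proper_3_coloring_diamond_tips_eq:
  assumes "proper_3_coloring V E \<phi>"
    and "x \<in> V" "y \<in> V" "z \<in> V" "t \<in> V"
    and "E x y" "E x z" "E y z" "E y t" "E z t"
  shows "\<phi> t = \<phi> x"
proof -
  have "\<phi> x < 3" "\<phi> y < 3" "\<phi> z < 3" "\<phi> t < 3"
    using assms(1-5) unfolding proper_3_coloring_def by auto
  moreover have "\<phi> x \<noteq> \<phi> y" "\<phi> x \<noteq> \<phi> z" "\<phi> y \<noteq> \<phi> z" "\<phi> y \<noteq> \<phi> t" "\<phi> z \<noteq> \<phi> t"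
    using assms(1,6-) unfolding proper_3_coloring_def by blast+
  ultimately show ?thesis by linarith
qed

lemma diamond_chain_hom_SucD:
  assumes "diamond_chain_hom V E n u v w" and "i < n"
  shows "u i \<in> V" "v (Suc i) \<in> V" "w (Suc i) \<in> V" "u (Suc i) \<in> V"
    and "E (u i) (v (Suc i))" "E (u i) (w (Suc i))" "E (v (Suc i)) (w (Suc i))"
    and "E (v (Suc i)) (u (Suc i))" "E (w (Suc i)) (u (Suc i))"
proof -
  have i: "Suc i \<in> {1..n}" using assms(2) by simp
  then show "u i \<in> V" "v (Suc i) \<in> V" "w (Suc i) \<in> V" "u (Suc i) \<in> V"
    using assms unfolding diamond_chain_hom_def by auto
  have "E (u (Suc i - 1)) (v (Suc i)) \<and> E (u (Suc i - 1)) (w (Suc i))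
      \<and> E (v (Suc i)) (w (Suc i)) \<and> E (v (Suc i)) (u (Suc i)) \<and> E (w (Suc i)) (u (Suc i))"
    using assms(1) i unfolding diamond_chain_hom_def by blast
  then show "E (u i) (v (Suc i))" "E (u i) (w (Suc i))" "E (v (Suc i)) (w (Suc i))"
    "E (v (Suc i)) (u (Suc i))" "E (w (Suc i)) (u (Suc i))"
    by simp_all
qed

lemma diamond_chain_hom_color_eq:
  assumes chain: "diamond_chain_hom V E n u v w" and \<phi>: "proper_3_coloring V E \<phi>"
    and "i \<le> n"
  shows "\<phi> (u i) = \<phi> (u 0)"
  using \<open>i \<le> n\<close>
proof (induction i)
  case 0
  then show ?case by simp
next
  case (Suc i)
  then have "i < n" by simp
  have "\<phi> (u (Suc i)) = \<phi> (u i)"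
    by (rule proper_3_coloring_diamond_tips_eq[OF \<phi> diamond_chain_hom_SucD[OF chain \<open>i < n\<close>]])
  with Suc show ?case by simp
qed

lemma connected_by_chain_of_diamonds_monochromatic:
  assumes "connected_by_chain_of_diamonds V E X" and \<phi>: "proper_3_coloring V E \<phi>"
  shows "card (\<phi> ` X) \<le> 1"
proof -
  obtain n u v w where chain: "diamond_chain_hom V E n u v w" and X: "X \<subseteq> u ` {0..n}"
    using assms(1) unfolding connected_by_chain_of_diamonds_def by blast
  have "\<phi> x = \<phi> (u 0)" if "x \<in> X" for x
  proof -
    obtain i where "i \<in> {0..n}" "x = u i" using X \<open>x \<in> X\<close> by blast
    then show ?thesis using diamond_chain_hom_color_eq[OF chain \<phi>, of i] by simp
  qed
  then have "\<phi> ` X \<subseteq> {\<phi> (u 0)}" by blast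
  then show ?thesis
    using card_mono[of "{\<phi> (u 0)}" "\<phi> ` X"] by simp
qed

theorem mainTheorem8:
  fixes V :: "'a set" and E :: "'a \<Rightarrow> 'a \<Rightarrow> bool" and X :: "'a set"
  assumes "graph V E"
    and "K4_minor_free V E"
    and "X \<subseteq> V" and "card X = 3"
    and "\<exists>\<phi>. proper_3_coloring V E \<phi> \<and> card (\<phi> ` X) = 2"
  shows "feasible V E X"
proof -
  obtain \<phi> where \<phi>: "proper_3_coloring V E \<phi>" and two: "card (\<phi> ` X) = 2"
    using assms(5) by blast
  have "\<not> connected_by_chain_of_diamonds V E X"
    using connected_by_chain_of_diamonds_monochromatic[OF _ \<phi>] two by force
  with assms(3,4) \<phi> two show ?thesis
    unfolding feasible_def by auto
qed

end
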